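(* Let $\psi,\varphi$ be metric formulas and $n\in\mathbb{N}$ with $n>0$. Then, with respect to strict timed traces: $$\psi\,\mathsf{U}_{[0,n]}\,\varphi\equiv\varphi\vee\Big(\psi\wedge\bigvee_{i=1}^{n}\circ_{[i,i]}\big(\psi\,\mathsf{U}_{[0,n-i]}\,\varphi\big)\Big),\qquad \psi\,\mathsf{R}_{[0,n]}\,\varphi\equiv\varphi\wedge\Big(\psi\vee\bigwedge_{i=1}^{n}\widehat{\circ}_{[i,i]}\big(\psi\,\mathsf{R}_{[0,n-i]}\,\varphi\big)\Big),$$ and the same holds for the dual past operators, i.e. the equivalences obtained by replacing $\mathsf{U},\mathsf{R},\circ,\widehat{\circ}$ by $\mathsf{S},\mathsf{T},\bullet,\widehat{\bullet}$ respectively.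
   Context: Write $[m,n)=\{i\in\mathbb{N}\mid m\le i<n\}$, $[m,n]=\{i\in\mathbb{N}\mid m\le i\le n\}$, $(m,n]=\{i\in\mathbb{N}\mid m<i\le n\}$. Metric formulas over a set of atoms $\mathcal{A}$: $\varphi::=p\mid\bot\mid\varphi_1\wedge\varphi_2\mid\varphi_1\vee\varphi_2\mid\varphi_1\to\varphi_2\mid\bullet_I\varphi\mid\varphi_1\mathsf{S}_I\varphi_2\mid\varphi_1\mathsf{T}_I\varphi_2\mid\circ_I\varphi\mid\varphi_1\mathsf{U}_I\varphi_2\mid\varphi_1\mathsf{R}_I\varphi_2$, $p\in\mathcal{A}$, $I=[m,n)$, $m\in\mathbb{N}$, $n\in\mathbb{N}\cup\{\omega\}$; a subscript $[m,n]$ with $n\in\mathbb{N}$ abbreviates $[m,n+1)$. Derived: $\neg\varphi:=\varphi\to\bot$, $\top:=\neg\bot$, $\widehat{\bullet}_I\varphi:=\bullet_I\varphi\vee\neg\bullet_I\top$, $\widehat{\circ}_I\varphi:=\circ_I\varphi\vee\neg\circ_I\top$. A timed HT-trace of length $\lambda\in\mathbb{N}\cup\{\omega\}$ is $\mathbf{M}=(\langle\mathbf{H},\mathbf{T}\rangle,\tau)$ with $H_i\subseteq T_i\subseteq\mathcal{A}$ for $i\in[0,\lambda)$, $\tau:[0,\lambda)\to\mathbb{N}$, $\tau(0)=0$, $\tau(i)\le\tau(i+1)$; strict if $\tau(i)<\tau(i+1)$ whenever $i+1<\lambda$. Satisfaction at $k\in[0,\lambda)$: $\bot$ never; $p$ iff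 $p\in H_k$; $\wedge,\vee$ usual; $\varphi\to\psi$ iff for both $\mathbf{M}'=\mathbf{M}$ and $\mathbf{M}'=(\langle\mathbf{T},\mathbf{T}\rangle,\tau)$, $\mathbf{M}',k\not\models\varphi$ or $\mathbf{M}',k\models\psi$; $\bullet_I\varphi$ iff $k>0$, $\mathbf{M},k-1\models\varphi$, $\tau(k)-\tau(k-1)\in I$; $\varphi\mathsf{S}_I\psi$ iff for some $j\in[0,k]$ with $\tau(k)-\tau(j)\in I$, $\mathbf{M},j\models\psi$ and $\mathbf{M},i\models\varphi$ for all $i\in(j,k]$; $\varphi\mathsf{T}_I\psi$ iff for all $j\in[0,k]$ with $\tau(k)-\tau(j)\in I$, $\mathbf{M},j\models\psi$ or $\mathbf{M},i\models\varphi$ for some $i\in(j,k]$; $\circ_I\varphi$ iff $k+1<\lambda$, $\mathbf{M},k+1\models\varphi$, $\tau(k+1)-\tau(k)\in I$; $\varphi\mathsf{U}_I\psi$ iff for some $j\in[k,\lambda)$ with $\tau(j)-\tau(k)\in I$, $\mathbf{M},j\models\psi$ and $\mathbf{M},i\models\varphi$ for all $i\in[k,j)$; $\varphi\mathsf{R}_I\psi$ iff for all $j\in[k,\lambda)$ with $\tau(j)-\tau(k)\in I$, $\mathbf{M},j\models\psi$ or $\mathbf{M},i\models\varphi$ for some $i\in[k,j)$. $\alpha\equiv\beta$ (w.r.t. strict traces) means: for every strict timed HT-trace $\mathbf{M}$ of any length $\lambda$ and every $k\in[0,\lambda)$, $\mathbf{M},k\models\alpha$ iff $\mathbf{M},k\models\beta$.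 *)

theory Defs
  imports Main "HOL-Library.Extended_Nat"
begin

text \<open>Intervals [m,n) with m a natural number and n a natural number or omega (= infinity).\<close>
type_synonym interval = "nat \<times> enat"

definition in_int :: "nat \<Rightarrow> interval \<Rightarrow> bool" where
  "in_int d I \<longleftrightarrow> fst I \<le> d \<and> enat d < snd I"

definition cint :: "nat \<Rightarrow> nat \<Rightarrow> interval" where
  "cint m n = (m, enat (n + 1))"

datatype 'a mformula =
    Atom 'a
  | Bot
  | And "'a mformula" "'a mformula"
  | Or "'a mformula" "'a mformula"
  | Imp "'a mformula" "'a mformula"
  | Prev interval "'a mformula"
  | Since interval "'a mformula" "'a mformula"
  | Trigger interval "'a mformula" "'a mformula"
  | Next interval "'a mformula"
  | Until interval "'a mformula" "'a mformula"
  | Release interval "'a mformula" "'a mformula"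

definition Neg :: "'a mformula \<Rightarrow> 'a mformula" where
  "Neg f = Imp f Bot"

definition Top :: "'a mformula" where
  "Top = Neg Bot"

definition WPrev :: "interval \<Rightarrow> 'a mformula \<Rightarrow> 'a mformula" where
  "WPrev I f = Or (Prev I f) (Neg (Prev I Top))"

definition WNext :: "interval \<Rightarrow> 'a mformula \<Rightarrow> 'a mformula" where
  "WNext I f = Or (Next I f) (Neg (Next I Top))"

fun BigOr :: "'a mformula list \<Rightarrow> 'a mformula" where
  "BigOr [] = Bot"
| "BigOr [f] = f"
| "BigOr (f # fs) = Or f (BigOr fs)"

fun BigAnd :: "'a mformula list \<Rightarrow> 'a mformula" where
  "BigAnd [] = Top"
| "BigAnd [f] = f"
| "BigAnd (f # fs) = And f (BigAnd fs)"

text \<open>Satisfaction in a timed HT-trace ((H,T),tau) of length lam at position k.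
  The "here" component H is a parameter so that implication can also be evaluated
  in (T,T).\<close>
primrec sat :: "(nat \<Rightarrow> 'a set) \<Rightarrow> (nat \<Rightarrow> 'a set) \<Rightarrow> (nat \<Rightarrow> nat) \<Rightarrow> enat \<Rightarrow> nat \<Rightarrow> 'a mformula \<Rightarrow> bool" where
  "sat H T tau lam k (Atom p) = (p \<in> H k)"
| "sat H T tau lam k Bot = False"
| "sat H T tau lam k (And f g) = (sat H T tau lam k f \<and> sat H T tau lam k g)"
| "sat H T tau lam k (Or f g) = (sat H T tau lam k f \<or> sat H T tau lam k g)"
| "sat H T tau lam k (Imp f g) =
     ((\<not> sat H T tau lam k f \<or> sat H T tau lam k g) \<and>
      (\<not> sat T T tau lam k f \<or> sat T T tau lam k g))"
| "sat H T tau lam k (Prev I f) =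
     (k > 0 \<and> sat H T tau lam (k - 1) f \<and> in_int (tau k - tau (k - 1)) I)"
| "sat H T tau lam k (Since I f g) =
     (\<exists>j\<le>k. in_int (tau k - tau j) I \<and> sat H T tau lam j g \<and>
        (\<forall>i. j < i \<and> i \<le> k \<longrightarrow> sat H T tau lam i f))"
| "sat H T tau lam k (Trigger I f g) =
     (\<forall>j\<le>k. in_int (tau k - tau j) I \<longrightarrow> sat H T tau lam j g \<or>
        (\<exists>i. j < i \<and> i \<le> k \<and> sat H T tau lam i f))"
| "sat H T tau lam k (Next I f) =
     (enat (k + 1) < lam \<and> sat H T tau lam (k + 1) f \<and> in_int (tau (k + 1) - tau k) I)"
| "sat H T tau lam k (Until I f g) =
     (\<exists>j. k \<le> j \<and> enat j < lam \<and> in_int (tau j - tau k) I \<and> sat H T tau lam j g \<and>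
        (\<forall>i. k \<le> i \<and> i < j \<longrightarrow> sat H T tau lam i f))"
| "sat H T tau lam k (Release I f g) =
     (\<forall>j. k \<le> j \<and> enat j < lam \<and> in_int (tau j - tau k) I \<longrightarrow> sat H T tau lam j g \<or>
        (\<exists>i. k \<le> i \<and> i < j \<and> sat H T tau lam i f))"

text \<open>Strict timed HT-trace of length lam (values at positions \<ge> lam are irrelevant).\<close>
definition strict_trace :: "(nat \<Rightarrow> 'a set) \<Rightarrow> (nat \<Rightarrow> 'a set) \<Rightarrow> (nat \<Rightarrow> nat) \<Rightarrow> enat \<Rightarrow> bool" where
  "strict_trace H T tau lam \<longleftrightarrow>
     (\<forall>i. enat i < lam \<longrightarrow> H i \<subseteq> T i) \<and> tau 0 = 0 \<and>
     (\<forall>i. enat (i + 1) < lam \<longrightarrow> tau i \<le> tau (i + 1)) \<and>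
     (\<forall>i. enat (i + 1) < lam \<longrightarrow> tau i < tau (i + 1))"

definition equiv_strict :: "'a mformula \<Rightarrow> 'a mformula \<Rightarrow> bool" where
  "equiv_strict f g \<longleftrightarrow>
     (\<forall>H T tau lam k. strict_trace H T tau lam \<longrightarrow> enat k < lam \<longrightarrow>
        (sat H T tau lam k f \<longleftrightarrow> sat H T tau lam k g))"

end

theory Submission
  imports Defs
begin

text \<open>The bounded Until at position k unfolds by one step. If its witness j lies beyond k, then
  k + 1 is still in the trace and, timestamps being strictly increasing, the first delay
  d = tau (k + 1) - tau k lies in [1, n] while the remaining delay tau j - tau (k + 1) is at most
  n - d; conversely such a step followed by a witness for the [0, n - d] Until composes. The past
  case is the mirror image, and Release and Trigger follow by duality.\<close>

definition strict_timestamps :: "enat \<Rightarrow> (nat \<Rightarrow> 'a::order) \<Rightarrow> bool" where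
  "strict_timestamps lam tau \<longleftrightarrow> (\<forall>i. enat (i + 1) < lam \<longrightarrow> tau i < tau (i + 1))"

lemma strict_trace_strict_timestamps: "strict_trace H T tau lam \<Longrightarrow> strict_timestamps lam tau"
  by (simp add: strict_trace_def strict_timestamps_def)

lemma strict_timestampsD:
  "strict_timestamps lam tau \<Longrightarrow> enat (Suc i) < lam \<Longrightarrow> tau i < tau (Suc i)"
  by (simp add: strict_timestamps_def)

lemma strict_timestamps_mono:
  assumes "strict_timestamps lam tau" and "i \<le> j" and "enat j < lam"
  shows "tau i \<le> tau j"
  using assms(2,3)
proof (induction j rule: dec_induct)
  case (step m)
  have "tau m < tau (Suc m)"
    using strict_timestampsD[OF assms(1) step.prems] .
  moreover have "tau i \<le> tau m"
    using step.IH step.prems by (metis Suc_ile_eq less_imp_le)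
  ultimately show ?case
    by (meson less_imp_le order.trans)
qed simp

definition bounded_until ::
    "(nat \<Rightarrow> nat) \<Rightarrow> enat \<Rightarrow> nat \<Rightarrow> (nat \<Rightarrow> bool) \<Rightarrow> (nat \<Rightarrow> bool) \<Rightarrow> nat \<Rightarrow> bool" where
  "bounded_until tau lam n p q k \<longleftrightarrow>
     (\<exists>j\<ge>k. enat j < lam \<and> tau j - tau k \<le> n \<and> q j \<and> (\<forall>i. k \<le> i \<and> i < j \<longrightarrow> p i))"

definition bounded_since ::
    "(nat \<Rightarrow> nat) \<Rightarrow> nat \<Rightarrow> (nat \<Rightarrow> bool) \<Rightarrow> (nat \<Rightarrow> bool) \<Rightarrow> nat \<Rightarrow> bool" where
  "bounded_since tau n p q k \<longleftrightarrow>
     (\<exists>j\<le>k. tau k - tau j \<le> n \<and> q j \<and> (\<forall>i. j < i \<and> i \<le> k \<longrightarrow> p i))"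

lemma bounded_until_unfold:
  assumes strict: "strict_timestamps lam tau" and "enat k < lam"
  shows "bounded_until tau lam n p q k \<longleftrightarrow>
    q k \<or> p k \<and> (\<exists>i. 1 \<le> i \<and> i \<le> n \<and> enat (k + 1) < lam \<and> tau (k + 1) - tau k = i \<and>
      bounded_until tau lam (n - i) p q (k + 1))"
  (is "?until \<longleftrightarrow> ?unfolded")
proof
  assume ?until
  then obtain j where j: "k \<le> j" "enat j < lam" "tau j - tau k \<le> n" "q j"
      and p: "\<forall>i. k \<le> i \<and> i < j \<longrightarrow> p i"
    unfolding bounded_until_def by blast
  show ?unfolded
  proof (cases "j = k")
    case False
    with j(1) have "k + 1 \<le> j" by simp
    with j(2) have succ: "enat (k + 1) < lam"
      by (meson enat_ord_simps(1) order.strict_trans1)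
    have "tau k < tau (k + 1)" "tau (k + 1) \<le> tau j"
      using strict_timestampsD[OF strict] succ
        strict_timestamps_mono[OF strict \<open>k + 1 \<le> j\<close> j(2)]
      by simp_all
    moreover have "bounded_until tau lam (n - (tau (k + 1) - tau k)) p q (k + 1)"
      unfolding bounded_until_def
      using \<open>k + 1 \<le> j\<close> j p calculation by (intro exI[of _ j]) auto
    ultimately show ?thesis
      using succ \<open>k + 1 \<le> j\<close> j(3) p by (intro disjI2 conjI exI[of _ "tau (k + 1) - tau k"]) auto
  qed (use j in simp)
next
  assume ?unfolded
  then show ?until
  proof
    assume "q k"
    with assms(2) show ?until
      unfolding bounded_until_def by (intro exI[of _ k]) auto
  next
    assume "p k \<and> (\<exists>i. 1 \<le> i \<and> i \<le> n \<and> enat (k + 1) < lam \<and> tau (k + 1) - tau k = i \<and>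
      bounded_until tau lam (n - i) p q (k + 1))"
    then obtain i j where "p k" "1 \<le> i" "i \<le> n" "tau (k + 1) - tau k = i"
        and j: "k + 1 \<le> j" "enat j < lam" "tau j - tau (k + 1) \<le> n - i" "q j"
        and p: "\<forall>l. k + 1 \<le> l \<and> l < j \<longrightarrow> p l"
      unfolding bounded_until_def by blast
    moreover have "tau (k + 1) \<le> tau j"
      using strict_timestamps_mono[OF strict j(1,2)] .
    moreover have "\<forall>l. k \<le> l \<and> l < j \<longrightarrow> p l"
      using p \<open>p k\<close> by (metis Suc_eq_plus1 Suc_leI le_neq_implies_less)
    ultimately show ?until
      unfolding bounded_until_def by (intro exI[of _ j]) auto
  qed
qed

lemma bounded_since_unfold:
  assumes strict: "strict_timestamps lam tau" and "enat k < lam"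
  shows "bounded_since tau n p q k \<longleftrightarrow>
    q k \<or> p k \<and> (\<exists>i. 1 \<le> i \<and> i \<le> n \<and> 0 < k \<and> tau k - tau (k - 1) = i \<and>
      bounded_since tau (n - i) p q (k - 1))"
  (is "?since \<longleftrightarrow> ?unfolded")
proof
  assume ?since
  then obtain j where j: "j \<le> k" "tau k - tau j \<le> n" "q j"
      and p: "\<forall>i. j < i \<and> i \<le> k \<longrightarrow> p i"
    unfolding bounded_since_def by blast
  show ?unfolded
  proof (cases "j = k")
    case False
    with j(1) obtain m where k: "k = Suc m" and "j \<le> m"
      by (cases k) auto
    have "enat m < lam"
      using assms(2) k by (metis Suc_ile_eq less_imp_le)
    have "tau m < tau k" "tau j \<le> tau m"
      using strict_timestampsD[OF strict] assms(2) k
        strict_timestamps_mono[OF strict \<open>j \<le> m\<close> \<open>enat m < lam\<close>]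
      by simp_all
    moreover have "bounded_since tau (n - (tau k - tau m)) p q m"
      unfolding bounded_since_def
      using \<open>j \<le> m\<close> j p k calculation by (intro exI[of _ j]) auto
    ultimately show ?thesis
      using k \<open>j \<le> m\<close> j(2) p by (intro disjI2 conjI exI[of _ "tau k - tau m"]) auto
  qed (use j in simp)
next
  assume ?unfolded
  then show ?since
  proof
    assume "q k"
    then show ?since
      unfolding bounded_since_def by (intro exI[of _ k]) auto
  next
    assume "p k \<and> (\<exists>i. 1 \<le> i \<and> i \<le> n \<and> 0 < k \<and> tau k - tau (k - 1) = i \<and>
      bounded_since tau (n - i) p q (k - 1))"
    then obtain i j m where "p k" "1 \<le> i" "i \<le> n" "k = Suc m" "tau k - tau m = i"
        and j: "j \<le> m" "tau m - tau j \<le> n - i" "q j"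
        and p: "\<forall>l. j < l \<and> l \<le> m \<longrightarrow> p l"
      unfolding bounded_since_def by (cases k) auto
    moreover have "enat m < lam"
      using assms(2) \<open>k = Suc m\<close> by (metis Suc_ile_eq less_imp_le)
    then have "tau j \<le> tau m"
      using strict_timestamps_mono[OF strict j(1)] by simp
    moreover have "\<forall>l. j < l \<and> l \<le> k \<longrightarrow> p l"
      using p \<open>p k\<close> \<open>k = Suc m\<close> le_Suc_eq by auto
    ultimately show ?since
      unfolding bounded_since_def by (intro exI[of _ j]) auto
  qed
qed

lemma in_int_cint [simp]: "in_int d (cint m n) \<longleftrightarrow> m \<le> d \<and> d \<le> n"
  by (auto simp: in_int_def cint_def)

lemma sat_Top [simp]: "sat H T tau lam k Top"
  by (simp add: Top_def Neg_def)

lemma sat_BigOr_map: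
  "sat H T tau lam k (BigOr (map f xs)) \<longleftrightarrow> (\<exists>x\<in>set xs. sat H T tau lam k (f x))"
  by (induction xs rule: induct_list012) auto

lemma sat_BigAnd_map:
  "sat H T tau lam k (BigAnd (map f xs)) \<longleftrightarrow> (\<forall>x\<in>set xs. sat H T tau lam k (f x))"
  by (induction xs rule: induct_list012) auto

lemma sat_WNext: "sat H T tau lam k (WNext I f) \<longleftrightarrow>
    (enat (k + 1) < lam \<and> in_int (tau (k + 1) - tau k) I \<longrightarrow> sat H T tau lam (k + 1) f)"
  by (auto simp: WNext_def Neg_def)

lemma sat_WPrev: "sat H T tau lam k (WPrev I f) \<longleftrightarrow>
    (0 < k \<and> in_int (tau k - tau (k - 1)) I \<longrightarrow> sat H T tau lam (k - 1) f)"
  by (auto simp: WPrev_def Neg_def)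

lemma sat_Until_cint_0:
  "sat H T tau lam k (Until (cint 0 n) f g) \<longleftrightarrow>
    bounded_until tau lam n (\<lambda>i. sat H T tau lam i f) (\<lambda>i. sat H T tau lam i g) k"
  by (auto simp: bounded_until_def)

text \<open>Although implication is intuitionistic, Release and Trigger are evaluated in the single
  world H, where they are the classical duals of Until and Since.\<close>

lemma sat_Release_cint_0:
  "sat H T tau lam k (Release (cint 0 n) f g) \<longleftrightarrow>
    \<not> bounded_until tau lam n (\<lambda>i. \<not> sat H T tau lam i f) (\<lambda>i. \<not> sat H T tau lam i g) k"
  by (auto simp: bounded_until_def)

lemma sat_Since_cint_0:
  "sat H T tau lam k (Since (cint 0 n) f g) \<longleftrightarrow>
    bounded_since tau n (\<lambda>i. sat H T tau lam i f) (\<lambda>i. sat H T tau lam i g) k"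
  by (auto simp: bounded_since_def)

lemma sat_Trigger_cint_0:
  "sat H T tau lam k (Trigger (cint 0 n) f g) \<longleftrightarrow>
    \<not> bounded_since tau n (\<lambda>i. \<not> sat H T tau lam i f) (\<lambda>i. \<not> sat H T tau lam i g) k"
  by (auto simp: bounded_since_def)

lemma equiv_strictI:
  assumes "\<And>H T tau lam k. strict_timestamps lam tau \<Longrightarrow> enat k < lam \<Longrightarrow>
    sat H T tau lam k f \<longleftrightarrow> sat H T tau lam k g"
  shows "equiv_strict f g"
  unfolding equiv_strict_def using assms strict_trace_strict_timestamps by blast

lemma Until_cint_0_expansion:
  "equiv_strict (Until (cint 0 n) psi phi)
     (Or phi (And psi (BigOr (map (\<lambda>i. Next (cint i i) (Until (cint 0 (n - i)) psi phi)) [1..<n+1]))))"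
  by (rule equiv_strictI, subst sat_Until_cint_0, subst bounded_until_unfold, assumption+)
    (unfold sat.simps(3,4,9) sat_BigOr_map set_upt in_int_cint sat_Until_cint_0, auto)

lemma Release_cint_0_expansion:
  "equiv_strict (Release (cint 0 n) psi phi)
     (And phi (Or psi (BigAnd (map (\<lambda>i. WNext (cint i i) (Release (cint 0 (n - i)) psi phi)) [1..<n+1]))))"
  by (rule equiv_strictI, subst sat_Release_cint_0, subst bounded_until_unfold, assumption+)
    (unfold sat.simps(3,4) sat_BigAnd_map set_upt sat_WNext in_int_cint sat_Release_cint_0, auto)

lemma Since_cint_0_expansion:
  "equiv_strict (Since (cint 0 n) psi phi)
     (Or phi (And psi (BigOr (map (\<lambda>i. Prev (cint i i) (Since (cint 0 (n - i)) psi phi)) [1..<n+1]))))"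
  by (rule equiv_strictI, subst sat_Since_cint_0, subst bounded_since_unfold, assumption+)
    (unfold sat.simps(3,4,6) sat_BigOr_map set_upt in_int_cint sat_Since_cint_0, auto)

lemma Trigger_cint_0_expansion:
  "equiv_strict (Trigger (cint 0 n) psi phi)
     (And phi (Or psi (BigAnd (map (\<lambda>i. WPrev (cint i i) (Trigger (cint 0 (n - i)) psi phi)) [1..<n+1]))))"
  by (rule equiv_strictI, subst sat_Trigger_cint_0, subst bounded_since_unfold, assumption+)
    (unfold sat.simps(3,4) sat_BigAnd_map set_upt sat_WPrev in_int_cint sat_Trigger_cint_0, auto)

theorem lemma3:
  fixes psi phi :: "'a mformula" and n :: nat
  assumes "n > 0"
  shows
   "equiv_strict (Until (cint 0 n) psi phi)
      (Or phi (And psi (BigOr (map (\<lambda>i. Next (cint i i) (Until (cint 0 (n - i)) psi phi)) [1..<n+1]))))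
    \<and> equiv_strict (Release (cint 0 n) psi phi)
      (And phi (Or psi (BigAnd (map (\<lambda>i. WNext (cint i i) (Release (cint 0 (n - i)) psi phi)) [1..<n+1]))))
    \<and> equiv_strict (Since (cint 0 n) psi phi)
      (Or phi (And psi (BigOr (map (\<lambda>i. Prev (cint i i) (Since (cint 0 (n - i)) psi phi)) [1..<n+1]))))
    \<and> equiv_strict (Trigger (cint 0 n) psi phi)
      (And phi (Or psi (BigAnd (map (\<lambda>i. WPrev (cint i i) (Trigger (cint 0 (n - i)) psi phi)) [1..<n+1]))))"
  using Until_cint_0_expansion Release_cint_0_expansion Since_cint_0_expansion Trigger_cint_0_expansion
  by blast

end
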